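(* Let $(W,S)$ be a Coxeter system with $S$ finite such that all elements of $Q_W$ are conjugate in $W$ (i.e. $c(W)=1$). Then the central extension $0\to\mathbb{Z}\to\operatorname{Ad}(Q_W)\xrightarrow{\phi}W\to1$ (where $\mathbb{Z}$ is identified with $\ker\phi$ via $1\mapsto e_s^2$, $s\in S$) is the unique nontrivial central extension of $W$ by $\mathbb{Z}$, up to equivalence of extensions.
   Context: A Coxeter system $(W,S)$: $S$ finite, $m:S\times S\to\mathbb{N}\cup\{\infty\}$ with $m(s,s)=1$, $2\le m(s,t)=m(t,s)\le\infty$ for $s\ne t$, $W=\langle s\in S\mid (st)^{m(s,t)}=1\ (m(s,t)<\infty)\rangle$. The Coxeter quandle $Q_W=\bigcup_{w\in W}w^{-1}Sw$ has operation $x\ast y=yxy$; $\operatorname{Ad}(Q_W)=\langle e_x\ (x\in Q_W)\mid e_y^{-1}e_xe_y=e_{x\ast y}\rangle$; $\phi:\operatorname{Ad}(Q_W)\to W$ is $e_x\mapsto x$. When $c(W)=1$, $\ker\phi$ is central and infinite cyclic, generated by $e_s^2$, which is independent of $s\in S$. *)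

theory Defs
  imports "HOL-Algebra.Algebra" "HOL-Library.Extended_Nat"
begin

text \<open>Words in the free group on Xs: letters (x, True) = x, (x, False) = x^-1.\<close>

fun eval_word :: "('g, 'm) monoid_scheme \<Rightarrow> ('x \<Rightarrow> 'g) \<Rightarrow> ('x \<times> bool) list \<Rightarrow> 'g" where
  "eval_word G g [] = \<one>\<^bsub>G\<^esub>"
| "eval_word G g ((x, b) # w) =
     (if b then g x else inv\<^bsub>G\<^esub> (g x)) \<otimes>\<^bsub>G\<^esub> eval_word G g w"

text \<open>The congruence on words generated by free reduction and the relators R,
  i.e. equality in the group F(Xs)/<<R>>.\<close>

inductive pres_eq :: "('x \<times> bool) list set \<Rightarrow> ('x \<times> bool) list \<Rightarrow> ('x \<times> bool) list \<Rightarrow> bool"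
  for R where
  pres_refl: "pres_eq R w w"
| pres_sym: "pres_eq R u v \<Longrightarrow> pres_eq R v u"
| pres_trans: "pres_eq R u v \<Longrightarrow> pres_eq R v w \<Longrightarrow> pres_eq R u w"
| pres_cancel: "pres_eq R (u @ [(x, b), (x, \<not> b)] @ v) (u @ v)"
| pres_rel: "r \<in> R \<Longrightarrow> pres_eq R (u @ r @ v) (u @ v)"

definition presented_by ::
  "('g, 'm) monoid_scheme \<Rightarrow> 'x set \<Rightarrow> ('x \<Rightarrow> 'g) \<Rightarrow> ('x \<times> bool) list set \<Rightarrow> bool" where
  "presented_by G Xs g R \<longleftrightarrow>
     group G \<and> g \<in> Xs \<rightarrow> carrier G \<and> generate G (g ` Xs) = carrier G \<and>
     (\<forall>r \<in> R. fst ` set r \<subseteq> Xs \<and> eval_word G g r = \<one>\<^bsub>G\<^esub>) \<and>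
     (\<forall>w. fst ` set w \<subseteq> Xs \<longrightarrow> eval_word G g w = \<one>\<^bsub>G\<^esub> \<longrightarrow> pres_eq R w [])"

definition coxeter_relators :: "'a set \<Rightarrow> ('a \<Rightarrow> 'a \<Rightarrow> enat) \<Rightarrow> ('a \<times> bool) list set" where
  "coxeter_relators S m =
     {concat (replicate (the_enat (m s t)) [(s, True), (t, True)]) | s t.
        s \<in> S \<and> t \<in> S \<and> m s t \<noteq> \<infinity>}"

definition coxeter_system :: "'a monoid \<Rightarrow> 'a set \<Rightarrow> ('a \<Rightarrow> 'a \<Rightarrow> enat) \<Rightarrow> bool" where
  "coxeter_system W S m \<longleftrightarrow>
     S \<subseteq> carrier W \<and>
     (\<forall>s \<in> S. m s s = 1) \<and>
     (\<forall>s \<in> S. \<forall>t \<in> S. s \<noteq> t \<longrightarrow> m s t = m t s \<and> 2 \<le> m s t) \<and>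
     presented_by W S id (coxeter_relators S m)"

definition coxeter_quandle :: "'a monoid \<Rightarrow> 'a set \<Rightarrow> 'a set" where
  "coxeter_quandle W S = {inv\<^bsub>W\<^esub> w \<otimes>\<^bsub>W\<^esub> s \<otimes>\<^bsub>W\<^esub> w | w s. w \<in> carrier W \<and> s \<in> S}"

definition quandle_op :: "'a monoid \<Rightarrow> 'a \<Rightarrow> 'a \<Rightarrow> 'a" where
  "quandle_op W x y = y \<otimes>\<^bsub>W\<^esub> x \<otimes>\<^bsub>W\<^esub> y"

definition adjoint_relators :: "'a monoid \<Rightarrow> 'a set \<Rightarrow> ('a \<times> bool) list set" where
  "adjoint_relators W Q =
     {[(y, False), (x, True), (y, True), (quandle_op W x y, False)] | x y. x \<in> Q \<and> y \<in> Q}"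

definition adjoint_group :: "'a monoid \<Rightarrow> 'a set \<Rightarrow> 'b monoid \<Rightarrow> ('a \<Rightarrow> 'b) \<Rightarrow> bool" where
  "adjoint_group W S A e \<longleftrightarrow>
     presented_by A (coxeter_quandle W S) e (adjoint_relators W (coxeter_quandle W S))"

text \<open>c(W) = 1: Q_W is nonempty and all its elements are conjugate in W.\<close>

definition one_conj_class :: "'a monoid \<Rightarrow> 'a set \<Rightarrow> bool" where
  "one_conj_class W S \<longleftrightarrow> coxeter_quandle W S \<noteq> {} \<and>
     (\<forall>x \<in> coxeter_quandle W S. \<forall>y \<in> coxeter_quandle W S.
        \<exists>w \<in> carrier W. y = inv\<^bsub>W\<^esub> w \<otimes>\<^bsub>W\<^esub> x \<otimes>\<^bsub>W\<^esub> w)"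

definition central_extension ::
  "('n, 'x) monoid_scheme \<Rightarrow> ('g, 'y) monoid_scheme \<Rightarrow> ('e, 'z) monoid_scheme
     \<Rightarrow> ('n \<Rightarrow> 'e) \<Rightarrow> ('e \<Rightarrow> 'g) \<Rightarrow> bool" where
  "central_extension N G E i p \<longleftrightarrow>
     group N \<and> group G \<and> group E \<and>
     i \<in> hom N E \<and> inj_on i (carrier N) \<and>
     p \<in> hom E G \<and> p ` carrier E = carrier G \<and>
     i ` carrier N = kernel E G p \<and>
     (\<forall>z \<in> i ` carrier N. \<forall>x \<in> carrier E. z \<otimes>\<^bsub>E\<^esub> x = x \<otimes>\<^bsub>E\<^esub> z)"

definition ext_equiv ::
  "('n, 'x) monoid_scheme \<Rightarrow> ('g, 'y) monoid_scheme
     \<Rightarrow> ('e, 'z) monoid_scheme \<Rightarrow> ('n \<Rightarrow> 'e) \<Rightarrow> ('e \<Rightarrow> 'g)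
     \<Rightarrow> ('f, 'w) monoid_scheme \<Rightarrow> ('n \<Rightarrow> 'f) \<Rightarrow> ('f \<Rightarrow> 'g) \<Rightarrow> bool" where
  "ext_equiv N G E i p E' i' p' \<longleftrightarrow>
     (\<exists>\<theta> \<in> iso E E'. (\<forall>n \<in> carrier N. \<theta> (i n) = i' n) \<and>
                      (\<forall>x \<in> carrier E. p' (\<theta> x) = p x))"

definition nontrivial_extension ::
  "('n, 'x) monoid_scheme \<Rightarrow> ('g, 'y) monoid_scheme \<Rightarrow> ('e, 'z) monoid_scheme
     \<Rightarrow> ('n \<Rightarrow> 'e) \<Rightarrow> ('e \<Rightarrow> 'g) \<Rightarrow> bool" where
  "nontrivial_extension N G E i p \<longleftrightarrow>
     \<not> ext_equiv N G E i p (N \<times>\<times> G) (\<lambda>n. (n, \<one>\<^bsub>G\<^esub>)) snd"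

end

theory Submission
  imports Defs
begin

text \<open>
  In Ad(Q_W) conjugation acts on the generators through W: a^-1 e_x a = e_y with
  y = \<phi>(a)^-1 x \<phi>(a). Hence the kernel of \<phi> commutes with all generators and is central;
  as all reflections are conjugate, every e_x^2 is the same central element c = e_s^2.
  Writing the Coxeter relation (s t)^m = 1 as the braid relation s t s ... = t s t ... and
  lifting it through the conjugation formula gives (e_s e_t)^m = c^m, so every word that is
  trivial in W evaluates to a power of c and ker \<phi> = \<langle>c\<rangle>. The map e_x \<mapsto> 1 onto \<int> sends c
  to 2, so \<langle>c\<rangle> is infinite cyclic, and a splitting would send c = e_s^2 to an element with
  even \<int>-coordinate, which is impossible since it must go to (1, 1).

  Conversely, in a central extension E of W by \<int> a lift of s can be corrected by a kernel
  element so that its square is i 0 or i 1; every reflection then has a unique lift with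
  that square. For square i 0 the lifts of S satisfy the Coxeter relations, since a central
  element inverted by conjugation vanishes in \<int>; this gives a section and E splits. For
  square i 1 the lifts of Q satisfy the adjoint relations, and the induced map
  Ad(Q_W) \<rightarrow> E is an equivalence by the five lemma.
\<close>

section \<open>Words and presentations\<close>

definition inverse_word :: "('x \<times> bool) list \<Rightarrow> ('x \<times> bool) list" where
  "inverse_word w = rev (map (apsnd Not) w)"

lemma set_inverse_word [simp]: "set (inverse_word w) = apsnd Not ` set w"
  by (simp add: inverse_word_def)

lemma inverse_word_Nil [simp]: "inverse_word [] = []"
  by (simp add: inverse_word_def)

lemma inverse_word_Cons [simp]: "inverse_word ((x, b) # w) = inverse_word w @ [(x, \<not> b)]"
  by (simp add: inverse_word_def)

lemma eval_word_cong:
  "(\<And>x. x \<in> fst ` set w \<Longrightarrow> f x = g x) \<Longrightarrow> eval_word G f w = eval_word G g w"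
  by (induction w) auto

context group
begin

lemma inv_mult_cancel_left: "x \<in> carrier G \<Longrightarrow> y \<in> carrier G \<Longrightarrow> inv x \<otimes> (x \<otimes> y) = y"
  by (simp add: m_assoc[symmetric])

lemma mult_inv_cancel_left: "x \<in> carrier G \<Longrightarrow> y \<in> carrier G \<Longrightarrow> x \<otimes> (inv x \<otimes> y) = y"
  by (simp add: m_assoc[symmetric])

lemma eval_word_closed:
  "\<forall>x \<in> fst ` set w. g x \<in> carrier G \<Longrightarrow> eval_word G g w \<in> carrier G"
  by (induction w) auto

lemma eval_word_append:
  "\<forall>x \<in> fst ` set (u @ v). g x \<in> carrier G \<Longrightarrow>
    eval_word G g (u @ v) = eval_word G g u \<otimes> eval_word G g v"
  by (induction u) (auto simp: m_assoc eval_word_closed)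

lemma eval_inverse_word:
  "\<forall>x \<in> fst ` set w. g x \<in> carrier G \<Longrightarrow>
    eval_word G g (inverse_word w) = inv (eval_word G g w)"
  by (induction w) (auto simp: eval_word_append eval_word_closed inv_mult_group)

lemma eval_word_replicate:
  assumes "g a \<in> carrier G" "g b \<in> carrier G"
  shows "eval_word G g (concat (replicate n [(a, True), (b, True)])) = (g a \<otimes> g b) [^] n"
  using assms by (induction n) (simp_all add: m_assoc[symmetric] nat_pow_Suc2[symmetric])

lemma eval_word_of_generate:
  assumes "x \<in> generate G (g ` Xs)" "g \<in> Xs \<rightarrow> carrier G"
  shows "\<exists>w. fst ` set w \<subseteq> Xs \<and> x = eval_word G g w"
  using assms(1)
proof induction
  case one
  show ?case by (rule exI[of _ "[]"]) simp
next
  case (incl h)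
  then obtain y where "y \<in> Xs" "h = g y" by blast
  with assms(2) show ?case by (intro exI[of _ "[(y, True)]"]) force
next
  case (inv h)
  then obtain y where "y \<in> Xs" "h = g y" by blast
  with assms(2) show ?case by (intro exI[of _ "[(y, False)]"]) force
next
  case (eng h1 h2)
  then obtain w1 w2 where "fst ` set w1 \<subseteq> Xs" "h1 = eval_word G g w1"
    "fst ` set w2 \<subseteq> Xs" "h2 = eval_word G g w2" by blast
  moreover have "eval_word G g (w1 @ w2) = eval_word G g w1 \<otimes> eval_word G g w2"
    by (rule eval_word_append) (use assms(2) calculation in auto)
  ultimately show ?case by (intro exI[of _ "w1 @ w2"]) auto
qed

end

lemma (in group_hom) hom_eval_word:
  "\<forall>x \<in> fst ` set w. g x \<in> carrier G \<Longrightarrow> h (eval_word G g w) = eval_word H (h \<circ> g) w"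
  by (induction w) (auto simp: G.eval_word_closed hom_inv)

text \<open>The map f has to be total because pres_eq may pass through words in arbitrary letters.\<close>

lemma (in group) pres_eq_eval_word_mod_normal:
  assumes "pres_eq R u v" and N: "N \<lhd> G" and f: "\<And>x. f x \<in> carrier G"
    and rel: "\<And>r. r \<in> R \<Longrightarrow> eval_word G f r \<in> N"
  shows "eval_word G f u \<otimes> inv (eval_word G f v) \<in> N"
  using assms(1)
proof induction
  interpret N: normal N G by (rule N)
  have ev: "\<And>w. eval_word G f w \<in> carrier G" by (simp add: eval_word_closed f)
  {
    case (pres_refl w)
    show ?case using ev by simp
  next
    case (pres_sym u v)
    then have "inv (eval_word G f u \<otimes> inv (eval_word G f v)) \<in> N" by simp
    then show ?case using ev by (simp add: inv_mult_group)
  next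
    case (pres_trans u v w)
    then have "(eval_word G f u \<otimes> inv (eval_word G f v)) \<otimes>
               (eval_word G f v \<otimes> inv (eval_word G f w)) \<in> N" by simp
    then show ?case using ev by (simp add: m_assoc inv_mult_cancel_left)
  next
    case (pres_cancel u x b v)
    have "eval_word G f (u @ [(x, b), (x, \<not> b)] @ v) = eval_word G f (u @ v)"
      using f[of x] ev by (cases b) (simp_all add: eval_word_append f m_assoc[symmetric])
    then show ?case using ev by simp
  next
    case (pres_rel r u v)
    let ?u = "eval_word G f u" and ?v = "eval_word G f v"
    have "eval_word G f (u @ r @ v) \<otimes> inv (eval_word G f (u @ v))
        = ?u \<otimes> eval_word G f r \<otimes> inv ?u"
      using ev by (simp add: eval_word_append f m_assoc inv_mult_group mult_inv_cancel_left)
    then show ?case using N.inv_op_closed2[OF ev rel[OF pres_rel]] by simp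
  }
qed

lemma presented_by_eval_word_eq:
  assumes pres: "presented_by G Xs g R" and H: "group H" and f: "\<And>x. f x \<in> carrier H"
    and rel: "\<And>r. r \<in> R \<Longrightarrow> eval_word H f r = \<one>\<^bsub>H\<^esub>"
    and w: "fst ` set w1 \<subseteq> Xs" "fst ` set w2 \<subseteq> Xs" "eval_word G g w1 = eval_word G g w2"
  shows "eval_word H f w1 = eval_word H f w2"
proof -
  interpret G: group G using pres by (simp add: presented_by_def)
  interpret H: group H by (rule H)
  have g: "\<And>x. x \<in> Xs \<Longrightarrow> g x \<in> carrier G" using pres by (auto simp: presented_by_def)
  let ?w = "w1 @ inverse_word w2"
  have g1: "\<forall>x \<in> fst ` set w1. g x \<in> carrier G"
    and g2: "\<forall>x \<in> fst ` set w2. g x \<in> carrier G" using w g by blast+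
  have "eval_word G g ?w = eval_word G g w1 \<otimes>\<^bsub>G\<^esub> inv\<^bsub>G\<^esub> eval_word G g w2"
    using g1 g2 by (simp add: G.eval_word_append G.eval_inverse_word ball_Un)
  then have "eval_word G g ?w = \<one>\<^bsub>G\<^esub>"
    using w(3) G.eval_word_closed[OF g2] by simp
  moreover have "fst ` set ?w \<subseteq> Xs" using w(1,2) by force
  ultimately have "pres_eq R ?w []" using pres by (auto simp: presented_by_def)
  then have "eval_word H f ?w \<otimes>\<^bsub>H\<^esub> inv\<^bsub>H\<^esub> \<one>\<^bsub>H\<^esub> \<in> {\<one>\<^bsub>H\<^esub>}"
    using H.pres_eq_eval_word_mod_normal[OF _ H.one_is_normal f] rel by fastforce
  then have "eval_word H f w1 \<otimes>\<^bsub>H\<^esub> inv\<^bsub>H\<^esub> eval_word H f w2 = \<one>\<^bsub>H\<^esub>"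
    by (simp add: H.eval_word_append H.eval_inverse_word H.eval_word_closed f)
  then show ?thesis by (simp add: H.eval_word_closed f H.inv_solve_right')
qed

lemma von_dyck:
  assumes pres: "presented_by G Xs g R" and H: "group H" and f: "f \<in> Xs \<rightarrow> carrier H"
    and rel: "\<And>r. r \<in> R \<Longrightarrow> eval_word H f r = \<one>\<^bsub>H\<^esub>"
  shows "\<exists>h \<in> hom G H. \<forall>x \<in> Xs. h (g x) = f x"
proof -
  interpret G: group G using pres by (simp add: presented_by_def)
  interpret H: group H by (rule H)
  have g: "g \<in> Xs \<rightarrow> carrier G" and gen: "generate G (g ` Xs) = carrier G"
    and R: "\<And>r. r \<in> R \<Longrightarrow> fst ` set r \<subseteq> Xs"
    using pres by (auto simp: presented_by_def)
  define f' where "f' x = (if x \<in> Xs then f x else \<one>\<^bsub>H\<^esub>)" for x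
  have f': "\<And>x. f' x \<in> carrier H" using f by (auto simp: f'_def)
  have f'_eq: "eval_word H f' w = eval_word H f w" if "fst ` set w \<subseteq> Xs" for w
    using that by (intro eval_word_cong) (auto simp: f'_def)
  have rel': "\<And>r. r \<in> R \<Longrightarrow> eval_word H f' r = \<one>\<^bsub>H\<^esub>" using rel R f'_eq by simp
  define word where "word a = (SOME w. fst ` set w \<subseteq> Xs \<and> a = eval_word G g w)" for a
  have word: "fst ` set (word a) \<subseteq> Xs \<and> a = eval_word G g (word a)" if "a \<in> carrier G" for a
    unfolding word_def by (rule someI_ex) (use G.eval_word_of_generate[of a g Xs] that gen g in simp)
  define h where "h a = eval_word H f' (word a)" for a
  have h_eval: "h (eval_word G g w) = eval_word H f' w" if w: "fst ` set w \<subseteq> Xs" for w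
  proof -
    have "eval_word G g w \<in> carrier G" by (rule G.eval_word_closed) (use w g in blast)
    from word[OF this] show ?thesis
      unfolding h_def by (intro presented_by_eval_word_eq[OF pres H f' rel']) (use w in auto)
  qed
  have "h \<in> hom G H"
  proof (rule homI)
    show "h a \<in> carrier H" for a unfolding h_def by (simp add: H.eval_word_closed f')
  next
    fix a b assume a: "a \<in> carrier G" and b: "b \<in> carrier G"
    have "h (a \<otimes>\<^bsub>G\<^esub> b) = h (eval_word G g (word a @ word b))"
      using word[OF a] word[OF b] g by (subst G.eval_word_append) auto
    also have "\<dots> = eval_word H f' (word a @ word b)"
      using word[OF a] word[OF b] by (intro h_eval) auto
    also have "\<dots> = h a \<otimes>\<^bsub>H\<^esub> h b" by (simp add: h_def H.eval_word_append f')
    finally show "h (a \<otimes>\<^bsub>G\<^esub> b) = h a \<otimes>\<^bsub>H\<^esub> h b" .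
  qed
  moreover have "h (g x) = f x" if "x \<in> Xs" for x
    using h_eval[of "[(x, True)]"] that g f by (auto simp: f'_def Pi_iff)
  ultimately show ?thesis by blast
qed

lemma (in group) hom_eq_on_generate:
  assumes "h1 \<in> hom G H" "h2 \<in> hom G H" "group H" "K \<subseteq> carrier G"
    and "\<And>x. x \<in> K \<Longrightarrow> h1 x = h2 x" "a \<in> generate G K"
  shows "h1 a = h2 a"
proof -
  interpret h1: group_hom G H h1 using assms by (simp add: group_hom_def group_hom_axioms_def)
  interpret h2: group_hom G H h2 using assms by (simp add: group_hom_def group_hom_axioms_def)
  from assms(6) show ?thesis
  proof induction
    case (eng a b)
    then show ?case using generate_in_carrier[OF assms(4)] by simp
  qed (use assms generate_in_carrier in auto)
qed

lemma (in group) commutes_with_generate: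
  assumes "K \<subseteq> carrier G" "z \<in> carrier G" "\<And>k. k \<in> K \<Longrightarrow> z \<otimes> k = k \<otimes> z"
    and "a \<in> generate G K"
  shows "z \<otimes> a = a \<otimes> z"
  using assms(4)
proof induction
  case (inv h)
  then have h: "h \<in> carrier G" using assms(1) by blast
  have "z \<otimes> inv h = inv h \<otimes> (h \<otimes> z) \<otimes> inv h" using h assms(2) by (simp add: m_assoc[symmetric])
  also have "\<dots> = inv h \<otimes> (z \<otimes> h) \<otimes> inv h" using assms(3)[OF inv] by simp
  also have "\<dots> = inv h \<otimes> z" using h assms(2) by (simp add: m_assoc)
  finally show ?case .
next
  case (eng a b)
  then have "a \<in> carrier G" "b \<in> carrier G" using generate_in_carrier[OF assms(1)] by auto
  with eng assms(2) show ?case by (metis m_assoc)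
qed (use assms in auto)

fun alternating_prod :: "('a, 'b) monoid_scheme \<Rightarrow> 'a \<Rightarrow> 'a \<Rightarrow> nat \<Rightarrow> 'a" where
  "alternating_prod G x y 0 = \<one>\<^bsub>G\<^esub>"
| "alternating_prod G x y (Suc n) = x \<otimes>\<^bsub>G\<^esub> alternating_prod G y x n"

context group
begin

lemma alternating_prod_closed [simp]:
  "x \<in> carrier G \<Longrightarrow> y \<in> carrier G \<Longrightarrow> alternating_prod G x y n \<in> carrier G"
  by (induction n arbitrary: x y) auto

lemma alternating_prod_Suc_right:
  "x \<in> carrier G \<Longrightarrow> y \<in> carrier G \<Longrightarrow>
    alternating_prod G x y (Suc n) = alternating_prod G x y n \<otimes> (if even n then x else y)"
proof (induction n arbitrary: x y)
  case (Suc n)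
  have "alternating_prod G x y (Suc (Suc n)) = x \<otimes> alternating_prod G y x (Suc n)"
    by (rule alternating_prod.simps(2))
  also have "\<dots> = x \<otimes> (alternating_prod G y x n \<otimes> (if even n then y else x))"
    using Suc by simp
  also have "\<dots> = alternating_prod G x y (Suc n) \<otimes> (if even (Suc n) then x else y)"
    using Suc.prems by (simp add: m_assoc)
  finally show ?case .
qed simp

lemma mult_pow_swap:
  "x \<in> carrier G \<Longrightarrow> y \<in> carrier G \<Longrightarrow> x \<otimes> (y \<otimes> x) [^] (n::nat) = (x \<otimes> y) [^] n \<otimes> x"
  by (induction n) (simp_all add: m_assoc[symmetric])

lemma alternating_prod_mult_inv:
  assumes x: "x \<in> carrier G" and y: "y \<in> carrier G" and xy: "y \<otimes> y = x \<otimes> x"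
  shows "alternating_prod G x y n \<otimes> inv (alternating_prod G y x n)
    = (x \<otimes> y) [^] n \<otimes> inv ((x \<otimes> x) [^] n)"
  using x y xy
proof (induction n arbitrary: x y)
  case (Suc n)
  let ?c = "x \<otimes> x" and ?A = "alternating_prod G y x n" and ?B = "alternating_prod G x y n"
  have x: "x \<in> carrier G" and y: "y \<in> carrier G" and c: "?c \<in> carrier G" using Suc.prems by auto
  have "?c \<otimes> y = y \<otimes> ?c" using Suc.prems(3) x y by (metis m_assoc)
  then have "?c [^] n \<otimes> y = y \<otimes> ?c [^] n" using y c group_commutes_pow by blast
  then have cn_inv_y: "inv (?c [^] n) \<otimes> inv y = inv y \<otimes> inv (?c [^] n)"
    using c y by (metis inv_mult_group nat_pow_closed)
  have inv_y: "inv y = y \<otimes> inv ?c"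
    using Suc.prems(3)[symmetric] y by (simp add: inv_mult_group m_assoc[symmetric])
  have swap: "x \<otimes> (y \<otimes> x) [^] n = (x \<otimes> y) [^] n \<otimes> x" using x y by (rule mult_pow_swap)
  have "alternating_prod G x y (Suc n) \<otimes> inv (alternating_prod G y x (Suc n))
      = x \<otimes> (?A \<otimes> inv ?B) \<otimes> inv y"
    using x y by (simp add: inv_mult_group m_assoc)
  also have "\<dots> = x \<otimes> ((y \<otimes> x) [^] n \<otimes> inv (?c [^] n)) \<otimes> inv y"
    using Suc.IH[of y x] Suc.prems by simp
  also have "\<dots> = x \<otimes> (y \<otimes> x) [^] n \<otimes> (inv (?c [^] n) \<otimes> inv y)"
    using x y c by (simp add: m_assoc)
  also have "\<dots> = (x \<otimes> y) [^] n \<otimes> x \<otimes> (inv y \<otimes> inv (?c [^] n))"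
    by (simp only: cn_inv_y swap)
  also have "\<dots> = (x \<otimes> y) [^] n \<otimes> (x \<otimes> (y \<otimes> inv ?c)) \<otimes> inv (?c [^] n)"
    using x y c by (simp add: m_assoc inv_y)
  also have "\<dots> = (x \<otimes> y) [^] Suc n \<otimes> inv (?c [^] Suc n)"
    using x y c by (simp add: m_assoc inv_mult_group)
  finally show ?case .
qed simp

lemma alternating_prod_eq_iff:
  assumes "x \<in> carrier G" "y \<in> carrier G" "y \<otimes> y = x \<otimes> x"
  shows "alternating_prod G x y n = alternating_prod G y x n \<longleftrightarrow> (x \<otimes> y) [^] n = (x \<otimes> x) [^] n"
proof -
  have "a \<otimes> inv b = \<one> \<longleftrightarrow> a = b" if "a \<in> carrier G" "b \<in> carrier G" for a b
    using that by (simp add: inv_solve_right')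
  then show ?thesis
    using alternating_prod_mult_inv[OF assms, of n] assms by (metis alternating_prod_closed m_closed nat_pow_closed)
qed

end

lemma (in group_hom) hom_alternating_prod:
  "x \<in> carrier G \<Longrightarrow> y \<in> carrier G \<Longrightarrow>
    h (alternating_prod G x y n) = alternating_prod H (h x) (h y) n"
  by (induction n arbitrary: x y) auto

section \<open>Extensions and their equivalence\<close>

lemma ext_equiv_sym:
  assumes "group E" "\<And>n. n \<in> carrier N \<Longrightarrow> i n \<in> carrier E"
    and "ext_equiv N G E i p E' i' p'"
  shows "ext_equiv N G E' i' p' E i p"
proof -
  obtain \<theta> where \<theta>: "\<theta> \<in> iso E E'" "\<And>n. n \<in> carrier N \<Longrightarrow> \<theta> (i n) = i' n"
    "\<And>x. x \<in> carrier E \<Longrightarrow> p' (\<theta> x) = p x"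
    using assms(3) unfolding ext_equiv_def by blast
  let ?\<theta>' = "inv_into (carrier E) \<theta>"
  have bij: "bij_betw \<theta> (carrier E) (carrier E')" using \<theta>(1) by (simp add: iso_def)
  have "?\<theta>' (i' n) = i n" if "n \<in> carrier N" for n
    using bij_betw_inv_into_left[OF bij assms(2)[OF that]] \<theta>(2)[OF that] by simp
  moreover have "p (?\<theta>' y) = p' y" if y: "y \<in> carrier E'" for y
  proof -
    have "?\<theta>' y \<in> carrier E" by (rule bij_betw_apply[OF bij_betw_inv_into[OF bij] y])
    then show ?thesis using \<theta>(3) bij_betw_inv_into_right[OF bij y] by metis
  qed
  ultimately show ?thesis
    unfolding ext_equiv_def using group.iso_set_sym[OF assms(1) \<theta>(1)] by blast
qed

lemma extension_hom_inj:
  assumes E: "central_extension N G E i p" and E': "central_extension N G E' i' p'"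
    and \<theta>: "\<theta> \<in> hom E E'" and \<theta>_i: "\<And>n. n \<in> carrier N \<Longrightarrow> \<theta> (i n) = i' n"
    and \<theta>_p: "\<And>x. x \<in> carrier E \<Longrightarrow> p' (\<theta> x) = p x"
  shows "inj_on \<theta> (carrier E)"
proof -
  interpret N: group N using E by (simp add: central_extension_def)
  interpret G: group G using E by (simp add: central_extension_def)
  interpret E: group E using E by (simp add: central_extension_def)
  interpret E': group E' using E' by (simp add: central_extension_def)
  interpret \<theta>: group_hom E E' \<theta>
    using \<theta> by (simp add: group_hom_def group_hom_axioms_def E.is_group E'.is_group)
  have i: "i \<in> hom N E" "i ` carrier N = kernel E G p"
    and i': "i' \<in> hom N E'" "inj_on i' (carrier N)" and p': "p' \<in> hom E' G"
    using E E' by (auto simp: central_extension_def)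
  have "kernel E E' \<theta> \<subseteq> {\<one>\<^bsub>E\<^esub>}"
  proof
    fix a assume a: "a \<in> kernel E E' \<theta>"
    then have "a \<in> kernel E G p"
      using \<theta>_p[of a] hom_one[OF p' E'.is_group G.is_group] by (auto simp: kernel_def)
    then have "a \<in> i ` carrier N" by (simp only: i(2))
    then obtain n where n: "n \<in> carrier N" "a = i n" by blast
    then have "i' n = i' \<one>\<^bsub>N\<^esub>"
      using a \<theta>_i hom_one[OF i'(1) N.is_group E'.is_group] by (simp add: kernel_def)
    then have "n = \<one>\<^bsub>N\<^esub>" using i'(2) n(1) by (simp add: inj_on_def)
    then show "a \<in> {\<one>\<^bsub>E\<^esub>}" using n hom_one[OF i(1) N.is_group E.is_group] by simp
  qed
  then show ?thesis by (intro \<theta>.trivial_ker_imp_inj) (auto simp: kernel_def)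
qed

lemma extension_hom_surj:
  assumes E: "central_extension N G E i p" and E': "central_extension N G E' i' p'"
    and \<theta>: "\<theta> \<in> hom E E'" and \<theta>_i: "\<And>n. n \<in> carrier N \<Longrightarrow> \<theta> (i n) = i' n"
    and \<theta>_p: "\<And>x. x \<in> carrier E \<Longrightarrow> p' (\<theta> x) = p x"
  shows "\<theta> ` carrier E = carrier E'"
proof -
  interpret E: group E using E by (simp add: central_extension_def)
  interpret E': group E' using E' by (simp add: central_extension_def)
  interpret \<theta>: group_hom E E' \<theta>
    using \<theta> by (simp add: group_hom_def group_hom_axioms_def E.is_group E'.is_group)
  interpret p': group_hom E' G p'
    using E E' by (simp add: group_hom_def group_hom_axioms_def central_extension_def)
  have i: "i \<in> hom N E" and i': "i' ` carrier N = kernel E' G p'"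
    and p: "p ` carrier E = carrier G"
    using E E' by (auto simp: central_extension_def)
  have "carrier E' \<subseteq> \<theta> ` carrier E"
  proof
    fix y assume y: "y \<in> carrier E'"
    then have "p' y \<in> p ` carrier E" using p by simp
    then obtain a where a: "a \<in> carrier E" "p a = p' y" by force
    have "y \<otimes>\<^bsub>E'\<^esub> inv\<^bsub>E'\<^esub> \<theta> a \<in> kernel E' G p'"
      using y a \<theta>_p by (simp add: kernel_def)
    then have "y \<otimes>\<^bsub>E'\<^esub> inv\<^bsub>E'\<^esub> \<theta> a \<in> i' ` carrier N" by (simp only: i')
    then obtain n where n: "n \<in> carrier N" "i' n = y \<otimes>\<^bsub>E'\<^esub> inv\<^bsub>E'\<^esub> \<theta> a" by auto
    have "y = \<theta> (i n) \<otimes>\<^bsub>E'\<^esub> \<theta> a"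
      using n(2) \<theta>_i[OF n(1)] y \<theta>.hom_closed[OF a(1)] by (simp add: E'.m_assoc)
    also have "\<dots> = \<theta> (i n \<otimes>\<^bsub>E\<^esub> a)"
      using hom_in_carrier[OF i n(1)] a(1) by simp
    finally show "y \<in> \<theta> ` carrier E" using hom_in_carrier[OF i n(1)] a(1) by blast
  qed
  then show ?thesis using \<theta>.hom_closed by blast
qed

lemma ext_equiv_of_hom:
  assumes E: "central_extension N G E i p" and E': "central_extension N G E' i' p'"
    and \<theta>: "\<theta> \<in> hom E E'" and \<theta>_i: "\<And>n. n \<in> carrier N \<Longrightarrow> \<theta> (i n) = i' n"
    and \<theta>_p: "\<And>x. x \<in> carrier E \<Longrightarrow> p' (\<theta> x) = p x"
  shows "ext_equiv N G E i p E' i' p'"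
proof -
  have "\<theta> \<in> iso E E'"
    using \<theta> extension_hom_inj[OF assms] extension_hom_surj[OF assms] by (simp add: iso_def bij_betw_def)
  then show ?thesis unfolding ext_equiv_def using \<theta>_i \<theta>_p by blast
qed

lemma central_extension_DirProd:
  assumes "comm_group N" "group G"
  shows "central_extension N G (N \<times>\<times> G) (\<lambda>n. (n, \<one>\<^bsub>G\<^esub>)) snd"
proof -
  interpret N: comm_group N by (rule assms(1))
  interpret G: group G by (rule assms(2))
  have "kernel (N \<times>\<times> G) G snd = (\<lambda>n. (n, \<one>\<^bsub>G\<^esub>)) ` carrier N"
    by (auto simp: kernel_def)
  moreover have "(\<lambda>n. (n, \<one>\<^bsub>G\<^esub>)) \<in> hom N (N \<times>\<times> G)" by (rule homI) auto
  moreover have "snd \<in> hom (N \<times>\<times> G) G" by (rule homI) auto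
  moreover have "snd ` carrier (N \<times>\<times> G) = carrier G" by (force simp: image_iff)
  ultimately show ?thesis
    unfolding central_extension_def
    by (auto simp: DirProd_group N.is_group G.is_group inj_on_def N.m_comm)
qed

locale int_central_extension =
  fixes G :: "'g monoid" and E :: "'e monoid" and i :: "int \<Rightarrow> 'e" and p :: "'e \<Rightarrow> 'g"
  assumes central: "central_extension integer_group G E i p"
begin

sublocale G: group G using central by (simp add: central_extension_def)
sublocale E: group E using central by (simp add: central_extension_def)
sublocale p: group_hom E G p
  using central by (simp add: central_extension_def group_hom_def group_hom_axioms_def)

lemma i_hom: "i \<in> hom integer_group E"
  using central by (simp add: central_extension_def)

lemma i_closed [simp]: "i n \<in> carrier E"
  using i_hom by (simp add: hom_in_carrier)

lemma i_add: "i (n + k) = i n \<otimes>\<^bsub>E\<^esub> i k"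
  using hom_mult[OF i_hom] by simp

lemma i_eq_one_iff: "i n = \<one>\<^bsub>E\<^esub> \<longleftrightarrow> n = 0"
proof -
  have "i 0 = \<one>\<^bsub>E\<^esub>" using hom_one[OF i_hom group_integer_group E.is_group] by simp
  moreover have "inj i" using central by (simp add: central_extension_def)
  ultimately show ?thesis by (metis injD)
qed

lemma i_central: "x \<in> carrier E \<Longrightarrow> i n \<otimes>\<^bsub>E\<^esub> x = x \<otimes>\<^bsub>E\<^esub> i n"
  using central by (simp add: central_extension_def)

lemma p_surj: "p ` carrier E = carrier G"
  using central by (simp add: central_extension_def)

lemma kernel_p: "kernel E G p = range i"
  using central by (simp add: central_extension_def)

lemma p_i [simp]: "p (i n) = \<one>\<^bsub>G\<^esub>"
proof -
  have "i n \<in> kernel E G p" by (simp add: kernel_p)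
  then show ?thesis by (simp add: kernel_def)
qed

lemma p_eq_one_imp_range_i: "x \<in> carrier E \<Longrightarrow> p x = \<one>\<^bsub>G\<^esub> \<Longrightarrow> \<exists>n. x = i n"
proof -
  assume "x \<in> carrier E" "p x = \<one>\<^bsub>G\<^esub>"
  then have "x \<in> range i" by (simp add: kernel_def flip: kernel_p)
  then show ?thesis by blast
qed

lemma lift_involution:
  assumes t: "t \<in> carrier G" "t \<otimes>\<^bsub>G\<^esub> t = \<one>\<^bsub>G\<^esub>"
  obtains l r where "l \<in> carrier E" "p l = t" "l \<otimes>\<^bsub>E\<^esub> l = i r" "r = 0 \<or> r = 1"
proof -
  have "t \<in> p ` carrier E" using t(1) by (simp only: p_surj)
  then obtain l0 where l0: "l0 \<in> carrier E" "p l0 = t" by blast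
  then have "p (l0 \<otimes>\<^bsub>E\<^esub> l0) = \<one>\<^bsub>G\<^esub>" using t(2) by simp
  then obtain k where k: "l0 \<otimes>\<^bsub>E\<^esub> l0 = i k" using p_eq_one_imp_range_i l0(1) by blast
  \<comment> \<open>multiplying by the central element i j changes the square by i (2 j)\<close>
  define l where "l = l0 \<otimes>\<^bsub>E\<^esub> i (- (k div 2))"
  have "l \<otimes>\<^bsub>E\<^esub> l = l0 \<otimes>\<^bsub>E\<^esub> (i (- (k div 2)) \<otimes>\<^bsub>E\<^esub> l0) \<otimes>\<^bsub>E\<^esub> i (- (k div 2))"
    using l0(1) by (simp add: l_def E.m_assoc)
  also have "\<dots> = l0 \<otimes>\<^bsub>E\<^esub> (l0 \<otimes>\<^bsub>E\<^esub> i (- (k div 2))) \<otimes>\<^bsub>E\<^esub> i (- (k div 2))"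
    by (simp only: i_central[OF l0(1)])
  also have "\<dots> = (l0 \<otimes>\<^bsub>E\<^esub> l0) \<otimes>\<^bsub>E\<^esub> (i (- (k div 2)) \<otimes>\<^bsub>E\<^esub> i (- (k div 2)))"
    using l0(1) by (simp add: E.m_assoc)
  also have "\<dots> = i (k + (- (k div 2) + - (k div 2)))" by (simp only: k i_add)
  also have "k + (- (k div 2) + - (k div 2)) = k mod 2" by presburger
  finally have "l \<otimes>\<^bsub>E\<^esub> l = i (k mod 2)" .
  moreover have "l \<in> carrier E" "p l = t" using l0 t by (simp_all add: l_def)
  moreover have "k mod 2 = 0 \<or> k mod 2 = 1" by presburger
  ultimately show ?thesis by (intro that)
qed

lemma square_lift_unique:
  assumes g: "g \<in> carrier E" "g' \<in> carrier E" "p g = p g'"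
    and sq: "g \<otimes>\<^bsub>E\<^esub> g = i r" "g' \<otimes>\<^bsub>E\<^esub> g' = i r"
  shows "g = g'"
proof -
  have "p (g' \<otimes>\<^bsub>E\<^esub> inv\<^bsub>E\<^esub> g) = \<one>\<^bsub>G\<^esub>" using g by simp
  then obtain n where "g' \<otimes>\<^bsub>E\<^esub> inv\<^bsub>E\<^esub> g = i n" using p_eq_one_imp_range_i g by blast
  then have g': "g' = i n \<otimes>\<^bsub>E\<^esub> g" using g by (simp add: E.inv_solve_right')
  have "i (n + n) \<otimes>\<^bsub>E\<^esub> i r = (i n \<otimes>\<^bsub>E\<^esub> i n) \<otimes>\<^bsub>E\<^esub> (g \<otimes>\<^bsub>E\<^esub> g)"
    by (simp only: i_add sq(1))
  also have "\<dots> = i n \<otimes>\<^bsub>E\<^esub> ((i n \<otimes>\<^bsub>E\<^esub> g) \<otimes>\<^bsub>E\<^esub> g)"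
    using g(1) by (simp add: E.m_assoc)
  also have "\<dots> = i n \<otimes>\<^bsub>E\<^esub> ((g \<otimes>\<^bsub>E\<^esub> i n) \<otimes>\<^bsub>E\<^esub> g)"
    by (simp only: i_central[OF g(1)])
  also have "\<dots> = g' \<otimes>\<^bsub>E\<^esub> g'"
    using g(1) by (simp add: g' E.m_assoc)
  finally have "i (n + n) \<otimes>\<^bsub>E\<^esub> i r = i r" by (simp only: sq(2))
  then have "i (n + n) = \<one>\<^bsub>E\<^esub>" by simp
  then have "i n = \<one>\<^bsub>E\<^esub>" by (simp add: i_eq_one_iff)
  then show ?thesis using g' g(1) by simp
qed

lemma conj_square_lift:
  assumes "g \<in> carrier E" "u \<in> carrier E" "g \<otimes>\<^bsub>E\<^esub> g = i r"
  shows "(inv\<^bsub>E\<^esub> u \<otimes>\<^bsub>E\<^esub> g \<otimes>\<^bsub>E\<^esub> u) \<otimes>\<^bsub>E\<^esub> (inv\<^bsub>E\<^esub> u \<otimes>\<^bsub>E\<^esub> g \<otimes>\<^bsub>E\<^esub> u) = i r"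
proof -
  have "(inv\<^bsub>E\<^esub> u \<otimes>\<^bsub>E\<^esub> g \<otimes>\<^bsub>E\<^esub> u) \<otimes>\<^bsub>E\<^esub> (inv\<^bsub>E\<^esub> u \<otimes>\<^bsub>E\<^esub> g \<otimes>\<^bsub>E\<^esub> u)
      = inv\<^bsub>E\<^esub> u \<otimes>\<^bsub>E\<^esub> (i r \<otimes>\<^bsub>E\<^esub> u)"
    using assms by (simp add: E.m_assoc E.mult_inv_cancel_left flip: assms(3))
  also have "\<dots> = i r" using assms(2) i_central[OF assms(2)] by (simp add: E.inv_mult_cancel_left)
  finally show ?thesis .
qed

text \<open>Unspecified unless x has a lift with square i r; then it is that (unique) lift.\<close>

definition square_lift :: "int \<Rightarrow> 'g \<Rightarrow> 'e" where
  "square_lift r x = (THE g. g \<in> carrier E \<and> p g = x \<and> g \<otimes>\<^bsub>E\<^esub> g = i r)"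

lemma square_lift_eq:
  assumes "g \<in> carrier E" "p g = x" "g \<otimes>\<^bsub>E\<^esub> g = i r"
  shows "square_lift r x = g"
  unfolding square_lift_def using assms square_lift_unique by blast

lemma pow_eq_one_of_involutions:
  assumes a: "a \<in> carrier E" "a \<otimes>\<^bsub>E\<^esub> a = \<one>\<^bsub>E\<^esub>" and b: "b \<in> carrier E" "b \<otimes>\<^bsub>E\<^esub> b = \<one>\<^bsub>E\<^esub>"
    and "p ((a \<otimes>\<^bsub>E\<^esub> b) [^]\<^bsub>E\<^esub> (n::nat)) = \<one>\<^bsub>G\<^esub>"
  shows "(a \<otimes>\<^bsub>E\<^esub> b) [^]\<^bsub>E\<^esub> n = \<one>\<^bsub>E\<^esub>"
proof -
  let ?c = "(a \<otimes>\<^bsub>E\<^esub> b) [^]\<^bsub>E\<^esub> n"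
  obtain j where j: "?c = i j" using p_eq_one_imp_range_i assms a b by blast
  have "inv\<^bsub>E\<^esub> (a \<otimes>\<^bsub>E\<^esub> b) = b \<otimes>\<^bsub>E\<^esub> a"
    using a b by (simp add: E.inv_mult_group E.inv_equality)
  then have inv_c: "(b \<otimes>\<^bsub>E\<^esub> a) [^]\<^bsub>E\<^esub> n = inv\<^bsub>E\<^esub> ?c"
    using a b E.nat_pow_inv[of "a \<otimes>\<^bsub>E\<^esub> b" n] by simp
  \<comment> \<open>conjugation by a inverts the central element ?c\<close>
  have "a \<otimes>\<^bsub>E\<^esub> (b \<otimes>\<^bsub>E\<^esub> a) [^]\<^bsub>E\<^esub> n = ?c \<otimes>\<^bsub>E\<^esub> a"
    by (rule E.mult_pow_swap[OF a(1) b(1)])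
  also have "\<dots> = a \<otimes>\<^bsub>E\<^esub> ?c" by (simp only: j i_central[OF a(1)])
  finally have "(b \<otimes>\<^bsub>E\<^esub> a) [^]\<^bsub>E\<^esub> n = ?c" using a b by (simp add: E.Units_eq)
  then have "?c \<otimes>\<^bsub>E\<^esub> ?c = ?c \<otimes>\<^bsub>E\<^esub> inv\<^bsub>E\<^esub> ?c" by (simp only: inv_c)
  also have "\<dots> = \<one>\<^bsub>E\<^esub>" using a b by simp
  finally have "i j \<otimes>\<^bsub>E\<^esub> i j = \<one>\<^bsub>E\<^esub>" by (simp only: j)
  then have "j = 0" by (simp flip: i_add add: i_eq_one_iff)
  then show ?thesis using j i_eq_one_iff by simp
qed

lemma split_of_section:
  assumes \<sigma>: "\<sigma> \<in> hom G E" and p_\<sigma>: "\<And>w. w \<in> carrier G \<Longrightarrow> p (\<sigma> w) = w"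
  shows "ext_equiv integer_group G (integer_group \<times>\<times> G) (\<lambda>n. (n, \<one>\<^bsub>G\<^esub>)) snd E i p"
proof (rule ext_equiv_of_hom)
  let ?\<kappa> = "\<lambda>(n, w). i n \<otimes>\<^bsub>E\<^esub> \<sigma> w"
  show "central_extension integer_group G (integer_group \<times>\<times> G) (\<lambda>n. (n, \<one>\<^bsub>G\<^esub>)) snd"
    by (rule central_extension_DirProd[OF abelian_integer_group G.is_group])
  show "central_extension integer_group G E i p" by (rule central)
  show "?\<kappa> \<in> hom (integer_group \<times>\<times> G) E"
  proof (rule homI)
    fix x y assume "x \<in> carrier (integer_group \<times>\<times> G)" "y \<in> carrier (integer_group \<times>\<times> G)"
    then obtain n w n' w' where xy: "x = (n, w)" "y = (n', w')" "w \<in> carrier G" "w' \<in> carrier G"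
      by auto
    then have \<sigma>w: "\<sigma> w \<in> carrier E" "\<sigma> w' \<in> carrier E" using \<sigma> by (simp_all add: hom_in_carrier)
    have "?\<kappa> (x \<otimes>\<^bsub>integer_group \<times>\<times> G\<^esub> y) = i n \<otimes>\<^bsub>E\<^esub> (i n' \<otimes>\<^bsub>E\<^esub> \<sigma> w) \<otimes>\<^bsub>E\<^esub> \<sigma> w'"
      using xy \<sigma>w \<sigma> by (simp add: i_add hom_mult E.m_assoc)
    also have "\<dots> = i n \<otimes>\<^bsub>E\<^esub> (\<sigma> w \<otimes>\<^bsub>E\<^esub> i n') \<otimes>\<^bsub>E\<^esub> \<sigma> w'"
      by (simp only: i_central[OF \<sigma>w(1)])
    also have "\<dots> = ?\<kappa> x \<otimes>\<^bsub>E\<^esub> ?\<kappa> y" using xy \<sigma>w by (simp add: E.m_assoc)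
    finally show "?\<kappa> (x \<otimes>\<^bsub>integer_group \<times>\<times> G\<^esub> y) = ?\<kappa> x \<otimes>\<^bsub>E\<^esub> ?\<kappa> y" .
  qed (use \<sigma> in \<open>auto simp: hom_in_carrier\<close>)
  show "?\<kappa> (n, \<one>\<^bsub>G\<^esub>) = i n" for n using hom_one[OF \<sigma> G.is_group E.is_group] by simp
  show "p (?\<kappa> x) = snd x" if "x \<in> carrier (integer_group \<times>\<times> G)" for x
    using that p_\<sigma> \<sigma> by (auto simp: hom_in_carrier)
qed

end

section \<open>The adjoint group of a Coxeter system\<close>

locale coxeter_adjoint =
  fixes W :: "'a monoid" and S :: "'a set" and m :: "'a \<Rightarrow> 'a \<Rightarrow> enat"
    and A :: "'b monoid" and e :: "'a \<Rightarrow> 'b" and \<phi> :: "'b \<Rightarrow> 'a"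
  assumes coxeter: "coxeter_system W S m"
    and adjoint: "adjoint_group W S A e"
    and \<phi>_hom: "\<phi> \<in> hom A W"
    and \<phi>_e: "\<forall>x \<in> coxeter_quandle W S. \<phi> (e x) = x"
begin

abbreviation Q where "Q \<equiv> coxeter_quandle W S"

lemma presented_W: "presented_by W S id (coxeter_relators S m)"
  using coxeter by (simp add: coxeter_system_def)

lemma presented_A: "presented_by A Q e (adjoint_relators W Q)"
  using adjoint by (simp add: adjoint_group_def)

sublocale W: group W using presented_W by (simp add: presented_by_def)
sublocale A: group A using presented_A by (simp add: presented_by_def)
sublocale \<phi>: group_hom A W \<phi>
  using \<phi>_hom by (simp add: group_hom_def group_hom_axioms_def A.is_group W.is_group)

lemma S_subset_carrier: "S \<subseteq> carrier W"
  using coxeter by (simp add: coxeter_system_def)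

lemma generate_S: "generate W S = carrier W"
  using presented_W by (simp add: presented_by_def)

lemma e_closed: "x \<in> Q \<Longrightarrow> e x \<in> carrier A"
  using presented_A by (auto simp: presented_by_def)

lemma generate_e_Q: "generate A (e ` Q) = carrier A"
  using presented_A by (simp add: presented_by_def)

lemma coxeter_generator_square: "t \<in> S \<Longrightarrow> t \<otimes>\<^bsub>W\<^esub> t = \<one>\<^bsub>W\<^esub>"
proof -
  assume t: "t \<in> S"
  then have "m t t = 1" using coxeter by (simp add: coxeter_system_def)
  then have "[(t, True), (t, True)] \<in> coxeter_relators S m"
    unfolding coxeter_relators_def using t
    by (intro CollectI exI[of _ t]) (simp add: one_enat_def)
  then have "eval_word W id [(t, True), (t, True)] = \<one>\<^bsub>W\<^esub>"
    using presented_W by (auto simp: presented_by_def)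
  then show ?thesis using t S_subset_carrier by auto
qed

lemma quandle_iff:
  "x \<in> Q \<longleftrightarrow> (\<exists>w \<in> carrier W. \<exists>t \<in> S. x = inv\<^bsub>W\<^esub> w \<otimes>\<^bsub>W\<^esub> t \<otimes>\<^bsub>W\<^esub> w)"
  unfolding coxeter_quandle_def by blast

lemma quandle_closed: "x \<in> Q \<Longrightarrow> x \<in> carrier W"
  using S_subset_carrier by (auto simp: quandle_iff)

lemma quandle_square: "x \<in> Q \<Longrightarrow> x \<otimes>\<^bsub>W\<^esub> x = \<one>\<^bsub>W\<^esub>"
proof -
  assume "x \<in> Q"
  then obtain w t where w: "w \<in> carrier W" and t: "t \<in> S"
    and x: "x = inv\<^bsub>W\<^esub> w \<otimes>\<^bsub>W\<^esub> t \<otimes>\<^bsub>W\<^esub> w" by (auto simp: quandle_iff)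
  have "x \<otimes>\<^bsub>W\<^esub> x = inv\<^bsub>W\<^esub> w \<otimes>\<^bsub>W\<^esub> (t \<otimes>\<^bsub>W\<^esub> t) \<otimes>\<^bsub>W\<^esub> w"
    using w t S_subset_carrier by (auto simp: x W.m_assoc W.mult_inv_cancel_left)
  then show ?thesis using w coxeter_generator_square[OF t] by simp
qed

lemma quandle_inv: "x \<in> Q \<Longrightarrow> inv\<^bsub>W\<^esub> x = x"
  using quandle_square quandle_closed W.inv_equality by blast

lemma S_subset_quandle: "S \<subseteq> Q"
proof
  fix t assume t: "t \<in> S"
  then have "t = inv\<^bsub>W\<^esub> \<one>\<^bsub>W\<^esub> \<otimes>\<^bsub>W\<^esub> t \<otimes>\<^bsub>W\<^esub> \<one>\<^bsub>W\<^esub>" using S_subset_carrier by auto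
  then show "t \<in> Q" using t unfolding quandle_iff by blast
qed

lemma quandle_conj_closed:
  "x \<in> Q \<Longrightarrow> w \<in> carrier W \<Longrightarrow> inv\<^bsub>W\<^esub> w \<otimes>\<^bsub>W\<^esub> x \<otimes>\<^bsub>W\<^esub> w \<in> Q"
proof -
  assume "x \<in> Q" and w: "w \<in> carrier W"
  then obtain v t where v: "v \<in> carrier W" and t: "t \<in> S"
    and x: "x = inv\<^bsub>W\<^esub> v \<otimes>\<^bsub>W\<^esub> t \<otimes>\<^bsub>W\<^esub> v" by (auto simp: quandle_iff)
  have "inv\<^bsub>W\<^esub> w \<otimes>\<^bsub>W\<^esub> x \<otimes>\<^bsub>W\<^esub> w
      = inv\<^bsub>W\<^esub> (v \<otimes>\<^bsub>W\<^esub> w) \<otimes>\<^bsub>W\<^esub> t \<otimes>\<^bsub>W\<^esub> (v \<otimes>\<^bsub>W\<^esub> w)"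
    using v w t S_subset_carrier by (auto simp: x W.m_assoc W.inv_mult_group)
  then show ?thesis using v w t unfolding quandle_iff by blast
qed

lemma adjoint_relation:
  assumes x: "x \<in> Q" and y: "y \<in> Q"
  shows "inv\<^bsub>A\<^esub> (e y) \<otimes>\<^bsub>A\<^esub> e x \<otimes>\<^bsub>A\<^esub> e y = e (y \<otimes>\<^bsub>W\<^esub> x \<otimes>\<^bsub>W\<^esub> y)"
proof -
  have z: "y \<otimes>\<^bsub>W\<^esub> x \<otimes>\<^bsub>W\<^esub> y \<in> Q"
    using quandle_conj_closed[OF x quandle_closed[OF y]] quandle_inv[OF y] by simp
  have "[(y, False), (x, True), (y, True), (quandle_op W x y, False)] \<in> adjoint_relators W Q"
    unfolding adjoint_relators_def using x y by blast
  then have "inv\<^bsub>A\<^esub> (e y) \<otimes>\<^bsub>A\<^esub> (e x \<otimes>\<^bsub>A\<^esub> (e y \<otimes>\<^bsub>A\<^esub> inv\<^bsub>A\<^esub> e (y \<otimes>\<^bsub>W\<^esub> x \<otimes>\<^bsub>W\<^esub> y)))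
      = \<one>\<^bsub>A\<^esub>"
    using presented_A e_closed x y z by (auto simp: presented_by_def quandle_op_def)
  then show ?thesis
    using e_closed x y z by (simp add: A.m_assoc[symmetric] A.inv_solve_right')
qed

lemma adjoint_relation_inverse:
  assumes x: "x \<in> Q" and y: "y \<in> Q"
  shows "e y \<otimes>\<^bsub>A\<^esub> e x \<otimes>\<^bsub>A\<^esub> inv\<^bsub>A\<^esub> (e y) = e (y \<otimes>\<^bsub>W\<^esub> x \<otimes>\<^bsub>W\<^esub> y)"
proof -
  let ?x' = "y \<otimes>\<^bsub>W\<^esub> x \<otimes>\<^bsub>W\<^esub> y"
  have x': "?x' \<in> Q" using quandle_conj_closed[of x y] x y quandle_inv quandle_closed by simp
  have "y \<otimes>\<^bsub>W\<^esub> ?x' \<otimes>\<^bsub>W\<^esub> y = x"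
    using quandle_closed[OF x] quandle_closed[OF y] quandle_square[OF y]
    by (simp add: W.m_assoc[symmetric]) (simp add: W.m_assoc)
  then have "e y \<otimes>\<^bsub>A\<^esub> e x \<otimes>\<^bsub>A\<^esub> inv\<^bsub>A\<^esub> (e y)
      = e y \<otimes>\<^bsub>A\<^esub> (inv\<^bsub>A\<^esub> (e y) \<otimes>\<^bsub>A\<^esub> e ?x' \<otimes>\<^bsub>A\<^esub> e y) \<otimes>\<^bsub>A\<^esub> inv\<^bsub>A\<^esub> (e y)"
    using adjoint_relation[OF x' y] by simp
  also have "\<dots> = e ?x'" using e_closed[OF y] e_closed[OF x'] by (simp add: A.m_assoc A.mult_inv_cancel_left)
  finally show ?thesis .
qed

lemma conj_e:
  assumes "a \<in> carrier A" "x \<in> Q"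
  shows "inv\<^bsub>A\<^esub> a \<otimes>\<^bsub>A\<^esub> e x \<otimes>\<^bsub>A\<^esub> a = e (inv\<^bsub>W\<^esub> (\<phi> a) \<otimes>\<^bsub>W\<^esub> x \<otimes>\<^bsub>W\<^esub> \<phi> a)"
proof -
  have "a \<in> generate A (e ` Q)" using assms(1) generate_e_Q by simp
  then have "\<forall>x \<in> Q. inv\<^bsub>A\<^esub> a \<otimes>\<^bsub>A\<^esub> e x \<otimes>\<^bsub>A\<^esub> a
                       = e (inv\<^bsub>W\<^esub> (\<phi> a) \<otimes>\<^bsub>W\<^esub> x \<otimes>\<^bsub>W\<^esub> \<phi> a)"
  proof induction
    case one
    show ?case using quandle_closed e_closed by simp
  next
    case (incl h)
    then show ?case using adjoint_relation \<phi>_e quandle_inv by auto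
  next
    case (inv h)
    then show ?case
      using adjoint_relation_inverse \<phi>_e quandle_inv quandle_closed e_closed by auto
  next
    case (eng h1 h2)
    have h: "h1 \<in> carrier A" "h2 \<in> carrier A" using eng.hyps generate_e_Q by simp_all
    show ?case
    proof
      fix x assume x: "x \<in> Q"
      let ?x1 = "inv\<^bsub>W\<^esub> (\<phi> h1) \<otimes>\<^bsub>W\<^esub> x \<otimes>\<^bsub>W\<^esub> \<phi> h1"
      have x1: "?x1 \<in> Q" using quandle_conj_closed x h by simp
      have "inv\<^bsub>A\<^esub> (h1 \<otimes>\<^bsub>A\<^esub> h2) \<otimes>\<^bsub>A\<^esub> e x \<otimes>\<^bsub>A\<^esub> (h1 \<otimes>\<^bsub>A\<^esub> h2)
          = inv\<^bsub>A\<^esub> h2 \<otimes>\<^bsub>A\<^esub> (inv\<^bsub>A\<^esub> h1 \<otimes>\<^bsub>A\<^esub> e x \<otimes>\<^bsub>A\<^esub> h1) \<otimes>\<^bsub>A\<^esub> h2"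
        using h e_closed x by (simp add: A.inv_mult_group A.m_assoc)
      also have "\<dots> = e (inv\<^bsub>W\<^esub> (\<phi> h2) \<otimes>\<^bsub>W\<^esub> ?x1 \<otimes>\<^bsub>W\<^esub> \<phi> h2)"
        using eng.IH x x1 by simp
      also have "\<dots> = e (inv\<^bsub>W\<^esub> (\<phi> (h1 \<otimes>\<^bsub>A\<^esub> h2)) \<otimes>\<^bsub>W\<^esub> x \<otimes>\<^bsub>W\<^esub> \<phi> (h1 \<otimes>\<^bsub>A\<^esub> h2))"
        using h x quandle_closed by (simp add: W.inv_mult_group W.m_assoc)
      finally show "inv\<^bsub>A\<^esub> (h1 \<otimes>\<^bsub>A\<^esub> h2) \<otimes>\<^bsub>A\<^esub> e x \<otimes>\<^bsub>A\<^esub> (h1 \<otimes>\<^bsub>A\<^esub> h2)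
          = e (inv\<^bsub>W\<^esub> (\<phi> (h1 \<otimes>\<^bsub>A\<^esub> h2)) \<otimes>\<^bsub>W\<^esub> x \<otimes>\<^bsub>W\<^esub> \<phi> (h1 \<otimes>\<^bsub>A\<^esub> h2))" .
    qed
  qed
  then show ?thesis using assms(2) by blast
qed

lemma kernel_central:
  assumes "a \<in> kernel A W \<phi>" "b \<in> carrier A"
  shows "a \<otimes>\<^bsub>A\<^esub> b = b \<otimes>\<^bsub>A\<^esub> a"
proof (rule A.commutes_with_generate)
  show "e ` Q \<subseteq> carrier A" using e_closed by blast
  show "a \<in> carrier A" using assms(1) by (simp add: kernel_def)
  show "b \<in> generate A (e ` Q)" using assms(2) generate_e_Q by simp
  fix k assume "k \<in> e ` Q"
  then obtain x where x: "x \<in> Q" "k = e x" by blast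
  have "inv\<^bsub>A\<^esub> a \<otimes>\<^bsub>A\<^esub> k \<otimes>\<^bsub>A\<^esub> a = k"
    using conj_e[of a x] assms(1) x quandle_closed by (simp add: kernel_def)
  then have "k \<otimes>\<^bsub>A\<^esub> a = a \<otimes>\<^bsub>A\<^esub> k"
    using \<open>a \<in> carrier A\<close> e_closed x by (simp add: A.m_assoc A.inv_solve_left')
  then show "a \<otimes>\<^bsub>A\<^esub> k = k \<otimes>\<^bsub>A\<^esub> a" by simp
qed

lemma coxeter_relatorE:
  assumes "r \<in> coxeter_relators S m"
  obtains s1 t1 n where "s1 \<in> S" "t1 \<in> S" "r = concat (replicate n [(s1, True), (t1, True)])"
    and "(s1 \<otimes>\<^bsub>W\<^esub> t1) [^]\<^bsub>W\<^esub> n = \<one>\<^bsub>W\<^esub>"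
proof -
  from assms obtain s1 t1 where st: "s1 \<in> S" "t1 \<in> S"
    and r: "r = concat (replicate (the_enat (m s1 t1)) [(s1, True), (t1, True)])"
    unfolding coxeter_relators_def by blast
  have "eval_word W id r = \<one>\<^bsub>W\<^esub>" using assms presented_W by (auto simp: presented_by_def)
  moreover have "s1 \<in> carrier W" "t1 \<in> carrier W" using st S_subset_carrier by auto
  ultimately have "(s1 \<otimes>\<^bsub>W\<^esub> t1) [^]\<^bsub>W\<^esub> the_enat (m s1 t1) = \<one>\<^bsub>W\<^esub>"
    using W.eval_word_replicate[of id s1 t1] r by simp
  with st r show ?thesis using that by blast
qed

lemma e_braid_relation:
  assumes s1: "s1 \<in> S" and t1: "t1 \<in> S"
    and braid: "alternating_prod W s1 t1 n = alternating_prod W t1 s1 n"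
  shows "alternating_prod A (e s1) (e t1) n = alternating_prod A (e t1) (e s1) n"
proof (cases n)
  case (Suc k)
  have Q: "s1 \<in> Q" "t1 \<in> Q" using s1 t1 S_subset_quandle by auto
  have W: "s1 \<in> carrier W" "t1 \<in> carrier W" using s1 t1 S_subset_carrier by auto
  have A: "e s1 \<in> carrier A" "e t1 \<in> carrier A" using e_closed Q by auto
  let ?U = "alternating_prod A (e t1) (e s1) k" and ?u = "alternating_prod W t1 s1 k"
  let ?z = "if even k then t1 else s1"
  have U: "?U \<in> carrier A" and u: "?u \<in> carrier W" using A W by simp_all
  have \<phi>U: "\<phi> ?U = ?u" using \<phi>.hom_alternating_prod[OF A(2,1)] \<phi>_e Q by simp
  have "s1 \<otimes>\<^bsub>W\<^esub> ?u = ?u \<otimes>\<^bsub>W\<^esub> ?z"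
    using braid W.alternating_prod_Suc_right[OF W(2,1)] Suc by simp
  then have z: "inv\<^bsub>W\<^esub> ?u \<otimes>\<^bsub>W\<^esub> s1 \<otimes>\<^bsub>W\<^esub> ?u = ?z"
    using u W by (simp add: W.m_assoc W.inv_solve_left')
  have "alternating_prod A (e s1) (e t1) n = ?U \<otimes>\<^bsub>A\<^esub> (inv\<^bsub>A\<^esub> ?U \<otimes>\<^bsub>A\<^esub> e s1 \<otimes>\<^bsub>A\<^esub> ?U)"
    using Suc U A by (simp add: A.m_assoc A.mult_inv_cancel_left)
  also have "\<dots> = ?U \<otimes>\<^bsub>A\<^esub> e ?z" using conj_e[OF U Q(1)] \<phi>U z by simp
  also have "\<dots> = alternating_prod A (e t1) (e s1) n"
    using Suc A.alternating_prod_Suc_right[OF A(2,1)] by simp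
  finally show ?thesis .
qed simp

lemma image_generate_e_S: "\<phi> ` generate A (e ` S) = carrier W"
proof -
  have "\<phi> ` e ` S = S"
    using \<phi>_e S_subset_quandle unfolding image_image by (simp add: subset_iff cong: image_cong)
  moreover have "e ` S \<subseteq> carrier A" using e_closed S_subset_quandle by blast
  ultimately show ?thesis using \<phi>.generate_img generate_S by metis
qed

lemma generate_e_S: "generate A (e ` S) = carrier A"
proof
  have sub: "subgroup (generate A (e ` S)) A"
    using A.generate_is_subgroup e_closed S_subset_quandle by blast
  then show "generate A (e ` S) \<subseteq> carrier A" by (rule subgroup.subset)
  have "e ` Q \<subseteq> generate A (e ` S)"
  proof
    fix k assume "k \<in> e ` Q"
    then obtain x where x: "x \<in> Q" "k = e x" by blast
    then obtain w t where w: "w \<in> carrier W" and t: "t \<in> S"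
      and x_eq: "x = inv\<^bsub>W\<^esub> w \<otimes>\<^bsub>W\<^esub> t \<otimes>\<^bsub>W\<^esub> w" unfolding quandle_iff by blast
    have "w \<in> \<phi> ` generate A (e ` S)" using w by (simp only: image_generate_e_S)
    then obtain a where a: "a \<in> generate A (e ` S)" "\<phi> a = w" by blast
    have "a \<in> carrier A" using subgroup.subset[OF sub] a(1) by blast
    moreover have "t \<in> Q" using t S_subset_quandle by blast
    ultimately have "k = inv\<^bsub>A\<^esub> a \<otimes>\<^bsub>A\<^esub> e t \<otimes>\<^bsub>A\<^esub> a"
      using conj_e[of a t] x x_eq a(2) by simp
    moreover have "e t \<in> generate A (e ` S)" using t by (blast intro: generate.incl)
    ultimately show "k \<in> generate A (e ` S)"
      using a(1) by (simp add: subgroup.m_closed[OF sub] subgroup.m_inv_closed[OF sub])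
  qed
  from A.generate_subgroup_incl[OF this sub] show "carrier A \<subseteq> generate A (e ` S)"
    using generate_e_Q by simp
qed

lemma \<phi>_surj: "\<phi> ` carrier A = carrier W"
  using image_generate_e_S generate_e_S by simp

lemma kernel_wordE:
  assumes a: "a \<in> kernel A W \<phi>"
  obtains u where "fst ` set u \<subseteq> S" "a = eval_word A e u" "pres_eq (coxeter_relators S m) u []"
proof -
  have "a \<in> generate A (e ` S)" using a generate_e_S by (simp add: kernel_def)
  then obtain u where u: "fst ` set u \<subseteq> S" "a = eval_word A e u"
    using A.eval_word_of_generate[of a e S] e_closed S_subset_quandle by blast
  have "\<forall>x \<in> fst ` set u. e x \<in> carrier A" using u(1) e_closed S_subset_quandle by blast
  then have "\<phi> a = eval_word W (\<phi> \<circ> e) u" using u(2) \<phi>.hom_eval_word by simp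
  also have "\<dots> = eval_word W id u"
    by (rule eval_word_cong) (use u(1) \<phi>_e S_subset_quandle in auto)
  finally have "eval_word W id u = \<one>\<^bsub>W\<^esub>" using a by (simp add: kernel_def)
  then have "pres_eq (coxeter_relators S m) u []"
    using u(1) presented_W by (auto simp: presented_by_def)
  with u show ?thesis by (rule that)
qed

lemma exists_hom_integer_group: "\<exists>\<psi> \<in> hom A integer_group. \<forall>x \<in> Q. \<psi> (e x) = 1"
proof -
  have "eval_word integer_group (\<lambda>_. 1) r = \<one>\<^bsub>integer_group\<^esub>" if "r \<in> adjoint_relators W Q" for r
    using that by (auto simp: adjoint_relators_def)
  then show ?thesis using von_dyck[OF presented_A group_integer_group, of "\<lambda>_. 1"] by simp
qed

end

locale coxeter_adjoint_one_class = coxeter_adjoint +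
  fixes s
  assumes one_class: "one_conj_class W S" and s: "s \<in> S"
begin

abbreviation c where "c \<equiv> e s \<otimes>\<^bsub>A\<^esub> e s"

lemma s_quandle: "s \<in> Q"
  using s S_subset_quandle by blast

lemma c_closed: "c \<in> carrier A"
  using e_closed[OF s_quandle] by simp

lemma c_kernel: "c \<in> kernel A W \<phi>"
  using c_closed e_closed[OF s_quandle] \<phi>_e s_quandle coxeter_generator_square[OF s]
  by (simp add: kernel_def)

lemma c_central: "a \<in> carrier A \<Longrightarrow> c \<otimes>\<^bsub>A\<^esub> a = a \<otimes>\<^bsub>A\<^esub> c"
  by (rule kernel_central[OF c_kernel])

lemma e_square: "x \<in> Q \<Longrightarrow> e x \<otimes>\<^bsub>A\<^esub> e x = c"
proof -
  assume x: "x \<in> Q"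
  obtain w where w: "w \<in> carrier W" "x = inv\<^bsub>W\<^esub> w \<otimes>\<^bsub>W\<^esub> s \<otimes>\<^bsub>W\<^esub> w"
    using one_class x s_quandle unfolding one_conj_class_def by blast
  have "w \<in> \<phi> ` carrier A" using w(1) by (simp only: \<phi>_surj)
  then obtain a where a: "a \<in> carrier A" "\<phi> a = w" by blast
  have es: "e s \<in> carrier A" using e_closed[OF s_quandle] .
  have "e x = inv\<^bsub>A\<^esub> a \<otimes>\<^bsub>A\<^esub> e s \<otimes>\<^bsub>A\<^esub> a" using conj_e[OF a(1) s_quandle] a(2) w(2) by simp
  then have "e x \<otimes>\<^bsub>A\<^esub> e x = inv\<^bsub>A\<^esub> a \<otimes>\<^bsub>A\<^esub> (c \<otimes>\<^bsub>A\<^esub> a)"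
    using a(1) es by (simp add: A.m_assoc A.mult_inv_cancel_left)
  also have "\<dots> = inv\<^bsub>A\<^esub> a \<otimes>\<^bsub>A\<^esub> (a \<otimes>\<^bsub>A\<^esub> c)" by (simp only: c_central[OF a(1)])
  also have "\<dots> = c" using a(1) c_closed by (rule A.inv_mult_cancel_left)
  finally show ?thesis .
qed

lemma e_coxeter_relation:
  assumes s1: "s1 \<in> S" and t1: "t1 \<in> S" and rel: "(s1 \<otimes>\<^bsub>W\<^esub> t1) [^]\<^bsub>W\<^esub> (n::nat) = \<one>\<^bsub>W\<^esub>"
  shows "(e s1 \<otimes>\<^bsub>A\<^esub> e t1) [^]\<^bsub>A\<^esub> n = c [^]\<^bsub>A\<^esub> n"
proof -
  have Q: "s1 \<in> Q" "t1 \<in> Q" using s1 t1 S_subset_quandle by auto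
  have W: "s1 \<in> carrier W" "t1 \<in> carrier W" using s1 t1 S_subset_carrier by auto
  have A: "e s1 \<in> carrier A" "e t1 \<in> carrier A" using e_closed Q by auto
  have "t1 \<otimes>\<^bsub>W\<^esub> t1 = s1 \<otimes>\<^bsub>W\<^esub> s1" using coxeter_generator_square s1 t1 by simp
  then have "alternating_prod W s1 t1 n = alternating_prod W t1 s1 n"
    using W.alternating_prod_eq_iff[OF W] rel coxeter_generator_square[OF s1] by simp
  then have "alternating_prod A (e s1) (e t1) n = alternating_prod A (e t1) (e s1) n"
    by (rule e_braid_relation[OF s1 t1])
  then show ?thesis using A.alternating_prod_eq_iff[OF A] e_square Q by simp
qed

lemma eval_coxeter_relator:
  assumes "r \<in> coxeter_relators S m" and f: "\<And>t. t \<in> S \<Longrightarrow> f t = e t"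
  shows "eval_word A f r \<in> generate A {c}"
proof -
  obtain s1 t1 n where st: "s1 \<in> S" "t1 \<in> S"
    and r: "r = concat (replicate n [(s1, True), (t1, True)])"
    and rel: "(s1 \<otimes>\<^bsub>W\<^esub> t1) [^]\<^bsub>W\<^esub> n = \<one>\<^bsub>W\<^esub>"
    using coxeter_relatorE[OF assms(1)] by blast
  have "f s1 \<in> carrier A" "f t1 \<in> carrier A" using st f e_closed S_subset_quandle by auto
  then have "eval_word A f r = c [^]\<^bsub>A\<^esub> int n"
    using A.eval_word_replicate[of f s1 t1 n] r e_coxeter_relation[OF st rel] st f by (simp add: int_pow_int)
  then show ?thesis using A.generate_pow[OF c_closed] by auto
qed

lemma kernel_eq_powers_c: "kernel A W \<phi> = range (\<lambda>k::int. c [^]\<^bsub>A\<^esub> k)"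
proof
  show "range (\<lambda>k::int. c [^]\<^bsub>A\<^esub> k) \<subseteq> kernel A W \<phi>"
    using c_kernel c_closed by (auto simp: kernel_def \<phi>.hom_int_pow)
  show "kernel A W \<phi> \<subseteq> range (\<lambda>k::int. c [^]\<^bsub>A\<^esub> k)"
  proof
    fix a assume "a \<in> kernel A W \<phi>"
    then obtain u where u: "fst ` set u \<subseteq> S" "a = eval_word A e u"
      and pres: "pres_eq (coxeter_relators S m) u []" by (rule kernel_wordE)
    have N: "generate A {c} \<lhd> A"
      using c_closed c_central by (intro A.normal_generateI) (auto simp: A.m_assoc A.mult_inv_cancel_left)
    define f where "f x = (if x \<in> S then e x else \<one>\<^bsub>A\<^esub>)" for x
    have f: "\<And>x. f x \<in> carrier A" using e_closed S_subset_quandle by (auto simp: f_def)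
    have "eval_word A f r \<in> generate A {c}" if "r \<in> coxeter_relators S m" for r
      using that by (rule eval_coxeter_relator) (simp add: f_def)
    from A.pres_eq_eval_word_mod_normal[OF pres N f this] have "eval_word A f u \<in> generate A {c}"
      using f by (simp add: A.eval_word_closed)
    moreover have "eval_word A f u = a"
      unfolding u(2) by (rule eval_word_cong) (use u(1) in \<open>auto simp: f_def\<close>)
    ultimately show "a \<in> range (\<lambda>k::int. c [^]\<^bsub>A\<^esub> k)"
      using A.generate_pow[OF c_closed] by auto
  qed
qed

lemma inj_powers_c: "inj (\<lambda>k::int. c [^]\<^bsub>A\<^esub> k)"
proof -
  obtain \<psi> where \<psi>: "\<psi> \<in> hom A integer_group" "\<forall>x \<in> Q. \<psi> (e x) = 1"
    using exists_hom_integer_group by blast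
  have "\<psi> c = 2" using \<psi> s_quandle e_closed[OF s_quandle] by (simp add: hom_mult)
  then have "\<psi> (c [^]\<^bsub>A\<^esub> k) = 2 * k" for k :: int
    using hom_int_pow[OF \<psi>(1) c_closed A.is_group group_integer_group] by simp
  then show ?thesis by (intro injI) (metis mult_cancel_left zero_neq_numeral)
qed

lemma central_extension_adjoint:
  "central_extension integer_group W A (\<lambda>k::int. c [^]\<^bsub>A\<^esub> k) \<phi>"
  unfolding central_extension_def
  using A.hom_integer_group_pow[OF c_closed] inj_powers_c \<phi>_hom \<phi>_surj kernel_eq_powers_c
    kernel_central A.is_group W.is_group
  by (simp add: inj_on_def inj_def)

lemma nontrivial_extension_adjoint:
  "nontrivial_extension integer_group W A (\<lambda>k::int. c [^]\<^bsub>A\<^esub> k) \<phi>"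
  unfolding nontrivial_extension_def ext_equiv_def
proof
  assume "\<exists>\<theta> \<in> iso A (integer_group \<times>\<times> W). (\<forall>k \<in> carrier integer_group. \<theta> (c [^]\<^bsub>A\<^esub> k) = (k, \<one>\<^bsub>W\<^esub>))
      \<and> (\<forall>x \<in> carrier A. snd (\<theta> x) = \<phi> x)"
  then obtain \<theta> where iso: "\<theta> \<in> iso A (integer_group \<times>\<times> W)"
    and powers: "\<And>k. \<theta> (c [^]\<^bsub>A\<^esub> k) = (k, \<one>\<^bsub>W\<^esub>)" by auto
  have \<theta>: "\<theta> \<in> hom A (integer_group \<times>\<times> W)" "\<theta> c = (1, \<one>\<^bsub>W\<^esub>)"
    using iso powers[of 1] c_closed by (auto simp: iso_def)
  obtain k w where "\<theta> (e s) = (k, w)" by force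
  then have "\<theta> c = (k + k, w \<otimes>\<^bsub>W\<^esub> w)" using hom_mult[OF \<theta>(1)] e_closed[OF s_quandle] by simp
  with \<theta>(2) have "k + k = 1" by simp
  then show False by presburger
qed

end

section \<open>Uniqueness of the nontrivial central extension\<close>

locale coxeter_adjoint_extension =
  coxeter_adjoint_one_class W S m A e \<phi> s + int_central_extension W E i p
  for W :: "'a monoid" and S m and A :: "'b monoid" and e \<phi> s
    and E :: "'e monoid" and i p
begin

lemma square_lift_quandle:
  assumes l: "l \<in> carrier E" "p l = s" "l \<otimes>\<^bsub>E\<^esub> l = i r" and x: "x \<in> Q"
  shows "square_lift r x \<in> carrier E \<and> p (square_lift r x) = x
    \<and> square_lift r x \<otimes>\<^bsub>E\<^esub> square_lift r x = i r"
proof -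
  obtain w where w: "w \<in> carrier W" "x = inv\<^bsub>W\<^esub> w \<otimes>\<^bsub>W\<^esub> s \<otimes>\<^bsub>W\<^esub> w"
    using one_class x s_quandle unfolding one_conj_class_def by blast
  have "w \<in> p ` carrier E" using w(1) by (simp only: p_surj)
  then obtain u where u: "u \<in> carrier E" "p u = w" by blast
  let ?g = "inv\<^bsub>E\<^esub> u \<otimes>\<^bsub>E\<^esub> l \<otimes>\<^bsub>E\<^esub> u"
  have g: "?g \<in> carrier E" "p ?g = x" "?g \<otimes>\<^bsub>E\<^esub> ?g = i r"
    using u l w conj_square_lift[OF l(1) u(1) l(3)] by simp_all
  then show ?thesis using square_lift_eq[OF g] by simp
qed

lemma split_if_square_zero:
  assumes l: "l \<in> carrier E" "p l = s" "l \<otimes>\<^bsub>E\<^esub> l = i 0"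
  shows "ext_equiv integer_group W (integer_group \<times>\<times> W) (\<lambda>n. (n, \<one>\<^bsub>W\<^esub>)) snd E i p"
proof -
  let ?f = "square_lift 0"
  have f: "?f t \<in> carrier E" "p (?f t) = t" "?f t \<otimes>\<^bsub>E\<^esub> ?f t = \<one>\<^bsub>E\<^esub>" if "t \<in> S" for t
    using square_lift_quandle[OF l] that S_subset_quandle i_eq_one_iff by auto
  have "eval_word E ?f r = \<one>\<^bsub>E\<^esub>" if r: "r \<in> coxeter_relators S m" for r
  proof -
    obtain s1 t1 n where st: "s1 \<in> S" "t1 \<in> S"
      and r_eq: "r = concat (replicate n [(s1, True), (t1, True)])"
      and rel: "(s1 \<otimes>\<^bsub>W\<^esub> t1) [^]\<^bsub>W\<^esub> n = \<one>\<^bsub>W\<^esub>"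
      using coxeter_relatorE[OF r] by blast
    have "p ((?f s1 \<otimes>\<^bsub>E\<^esub> ?f t1) [^]\<^bsub>E\<^esub> n) = \<one>\<^bsub>W\<^esub>"
      using f st rel by (simp add: p.hom_nat_pow)
    then show ?thesis
      using pow_eq_one_of_involutions f st E.eval_word_replicate[of ?f s1 t1 n] r_eq by simp
  qed
  then obtain \<sigma> where \<sigma>: "\<sigma> \<in> hom W E" "\<And>t. t \<in> S \<Longrightarrow> \<sigma> t = ?f t"
    using von_dyck[OF presented_W E.is_group, of ?f] f by auto
  have "(p \<circ> \<sigma>) w = id w" if "w \<in> carrier W" for w
  proof (rule W.hom_eq_on_generate[OF hom_compose[OF \<sigma>(1) p.homh] _ W.is_group S_subset_carrier])
    show "id \<in> hom W W" by (rule homI) auto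
    show "w \<in> generate W S" using that generate_S by simp
  qed (use \<sigma>(2) f in simp)
  then show ?thesis using split_of_section[OF \<sigma>(1)] by simp
qed

lemma equiv_if_square_one:
  assumes l: "l \<in> carrier E" "p l = s" "l \<otimes>\<^bsub>E\<^esub> l = i 1"
  shows "ext_equiv integer_group W A (\<lambda>k::int. c [^]\<^bsub>A\<^esub> k) \<phi> E i p"
proof -
  let ?f = "square_lift 1"
  have f: "?f x \<in> carrier E" "p (?f x) = x" "?f x \<otimes>\<^bsub>E\<^esub> ?f x = i 1" if "x \<in> Q" for x
    using square_lift_quandle[OF l that] by simp_all
  have "eval_word E ?f r = \<one>\<^bsub>E\<^esub>" if r: "r \<in> adjoint_relators W Q" for r
  proof -
    obtain x y where xy: "x \<in> Q" "y \<in> Q"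
      and r: "r = [(y, False), (x, True), (y, True), (quandle_op W x y, False)]"
      using r unfolding adjoint_relators_def by blast
    let ?h = "inv\<^bsub>E\<^esub> (?f y) \<otimes>\<^bsub>E\<^esub> ?f x \<otimes>\<^bsub>E\<^esub> ?f y"
    have "p ?h = quandle_op W x y"
      using f xy quandle_inv by (simp add: quandle_op_def)
    then have "?f (quandle_op W x y) = ?h"
      using f xy conj_square_lift by (intro square_lift_eq) simp_all
    then show ?thesis using f xy by (simp add: r E.m_assoc[symmetric])
  qed
  then obtain \<theta> where \<theta>: "\<theta> \<in> hom A E" "\<And>x. x \<in> Q \<Longrightarrow> \<theta> (e x) = ?f x"
    using von_dyck[OF presented_A E.is_group, of ?f] f by auto
  have "(p \<circ> \<theta>) a = \<phi> a" if "a \<in> carrier A" for a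
  proof (rule A.hom_eq_on_generate[OF hom_compose[OF \<theta>(1) p.homh] \<phi>_hom W.is_group])
    show "e ` Q \<subseteq> carrier A" using e_closed by blast
    show "a \<in> generate A (e ` Q)" using that generate_e_Q by simp
  qed (use \<theta>(2) f \<phi>_e in auto)
  moreover have "\<theta> (c [^]\<^bsub>A\<^esub> k) = i k" for k :: int
  proof -
    have "\<theta> c = i 1" using \<theta> f s_quandle e_closed[OF s_quandle] by (simp add: hom_mult)
    then show ?thesis
      using hom_int_pow[OF \<theta>(1) c_closed A.is_group E.is_group, of k]
        hom_int_pow[OF i_hom _ group_integer_group E.is_group, of 1 k] by simp
  qed
  ultimately show ?thesis
    using ext_equiv_of_hom[OF central_extension_adjoint central \<theta>(1)] by simp
qed

lemma unique_nontrivial_extension: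
  assumes "nontrivial_extension integer_group W E i p"
  shows "ext_equiv integer_group W E i p A (\<lambda>k::int. c [^]\<^bsub>A\<^esub> k) \<phi>"
proof -
  obtain l r where l: "l \<in> carrier E" "p l = s" "l \<otimes>\<^bsub>E\<^esub> l = i r" and r: "r = 0 \<or> r = 1"
    using lift_involution[OF _ coxeter_generator_square[OF s]] s S_subset_carrier by blast
  show ?thesis
  proof (cases "r = 0")
    case True
    then have "ext_equiv integer_group W E i p (integer_group \<times>\<times> W) (\<lambda>n. (n, \<one>\<^bsub>W\<^esub>)) snd"
      using split_if_square_zero[OF l(1,2)] l(3) E.is_group
      by (intro ext_equiv_sym[OF DirProd_group[OF group_integer_group W.is_group]]) auto
    with assms show ?thesis by (simp add: nontrivial_extension_def)
  next
    case False
    then have "r = 1" using r by simp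
    then show ?thesis
      using equiv_if_square_one[OF l(1,2)] l(3) c_closed
      by (intro ext_equiv_sym[OF A.is_group]) auto
  qed
qed

end

theorem corollary4p6:
  fixes W :: "'a monoid" and S :: "'a set" and m :: "'a \<Rightarrow> 'a \<Rightarrow> enat"
    and A :: "'b monoid" and e :: "'a \<Rightarrow> 'b" and \<phi> :: "'b \<Rightarrow> 'a"
  assumes "coxeter_system W S m"
    and "finite S"
    and "one_conj_class W S"
    and "adjoint_group W S A e"
    and "\<phi> \<in> hom A W"
    and "\<forall>x \<in> coxeter_quandle W S. \<phi> (e x) = x"
    and "s \<in> S"
  shows "central_extension integer_group W A (\<lambda>n::int. (e s \<otimes>\<^bsub>A\<^esub> e s) [^]\<^bsub>A\<^esub> n) \<phi>
       \<and> nontrivial_extension integer_group W A (\<lambda>n::int. (e s \<otimes>\<^bsub>A\<^esub> e s) [^]\<^bsub>A\<^esub> n) \<phi>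
       \<and> (\<forall>(E :: 'e monoid) i p.
            central_extension integer_group W E i p \<and> nontrivial_extension integer_group W E i p
            \<longrightarrow> ext_equiv integer_group W E i p A (\<lambda>n::int. (e s \<otimes>\<^bsub>A\<^esub> e s) [^]\<^bsub>A\<^esub> n) \<phi>)"
proof -
  interpret coxeter_adjoint_one_class W S m A e \<phi> s
    using assms by (simp add: coxeter_adjoint_one_class_def coxeter_adjoint_one_class_axioms_def
        coxeter_adjoint_def)
  have "ext_equiv integer_group W E i p A (\<lambda>n::int. c [^]\<^bsub>A\<^esub> n) \<phi>"
    if "central_extension integer_group W E i p" "nontrivial_extension integer_group W E i p"
    for E :: "'e monoid" and i p
  proof -
    interpret coxeter_adjoint_extension W S m A e \<phi> s E i p
      using that(1) by unfold_locales
    show ?thesis using unique_nontrivial_extension[OF that(2)] .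
  qed
  then show ?thesis using central_extension_adjoint nontrivial_extension_adjoint by blast
qed

end
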